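(* Let $X$ and $Y$ be metric spaces, let $A \subseteq X$ be closed, and let $F: A \Rightarrow Y$ be a multi-valued function which is continuous at every point of $A$ (with $A$ carrying the restricted metric). Then there exists a multi-valued function $G: X \Rightarrow Y$ with $G(x)=F(x)$ for all $x\in A$ which is continuous at every point of $X$.
   Context: A multi-valued function $F: X \Rightarrow Y$ assigns to each $x$ a nonempty set $F(x)\subseteq Y$. For metric spaces $(X,p),(Y,d)$, $F$ is continuous at $x$ if there is some $y \in F(x)$ such that for every $\varepsilon>0$ there is $\delta>0$ such that for every $x' \in B_p(x,\delta)$ there is $y' \in F(x')$ with $d(y,y')<\varepsilon$. *)

theory Defs
  imports "HOL-Analysis.Analysis"
begin

definition mv_fun :: "'a set \<Rightarrow> ('a \<Rightarrow> 'b set) \<Rightarrow> bool" where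
  "mv_fun S F \<longleftrightarrow> (\<forall>x\<in>S. F x \<noteq> {})"

definition mv_continuous_at ::
  "'a::metric_space set \<Rightarrow> ('a \<Rightarrow> 'b::metric_space set) \<Rightarrow> 'a \<Rightarrow> bool" where
  "mv_continuous_at S F x \<longleftrightarrow>
     (\<exists>y\<in>F x. \<forall>\<epsilon>>0. \<exists>\<delta>>0. \<forall>x'\<in>S. dist x x' < \<delta> \<longrightarrow> (\<exists>y'\<in>F x'. dist y y' < \<epsilon>))"

end

theory Submission
  imports Defs
begin

text \<open>Extend F by the whole space outside A. Every point off A then offers every value, so
  continuity at points of A is inherited from F, and a point off the closed set A has a ball
  free of A on which any fixed value is available.\<close>

lemma mv_continuous_atI:
  assumes "y \<in> F x"
    and "\<And>\<epsilon>. \<epsilon> > 0 \<Longrightarrow> \<exists>\<delta>>0. \<forall>x'\<in>S. dist x x' < \<delta> \<longrightarrow> (\<exists>y'\<in>F x'. dist y y' < \<epsilon>)"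
  shows "mv_continuous_at S F x"
  using assms unfolding mv_continuous_at_def by blast

definition mv_extend :: "'a set \<Rightarrow> ('a \<Rightarrow> 'b set) \<Rightarrow> 'a \<Rightarrow> 'b set" where
  "mv_extend A F x = (if x \<in> A then F x else UNIV)"

lemma mv_fun_mv_extend: "mv_fun A F \<Longrightarrow> mv_fun UNIV (mv_extend A F)"
  by (auto simp: mv_fun_def mv_extend_def)

lemma mv_continuous_at_mv_extend_in:
  assumes "x \<in> A" and "mv_continuous_at A F x"
  shows "mv_continuous_at UNIV (mv_extend A F) x"
proof -
  obtain y where y: "y \<in> F x"
    and cont: "\<And>\<epsilon>. \<epsilon> > 0 \<Longrightarrow> \<exists>\<delta>>0. \<forall>x'\<in>A. dist x x' < \<delta> \<longrightarrow> (\<exists>y'\<in>F x'. dist y y' < \<epsilon>)"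
    using assms(2) by (auto simp: mv_continuous_at_def)
  show ?thesis
  proof (rule mv_continuous_atI)
    show "y \<in> mv_extend A F x"
      using assms(1) y by (simp add: mv_extend_def)
  next
    fix \<epsilon> :: real assume "\<epsilon> > 0"
    then obtain \<delta> where "\<delta> > 0" and "\<forall>x'\<in>A. dist x x' < \<delta> \<longrightarrow> (\<exists>y'\<in>F x'. dist y y' < \<epsilon>)"
      using cont by blast
    with \<open>\<epsilon> > 0\<close>
    show "\<exists>\<delta>>0. \<forall>x'\<in>UNIV. dist x x' < \<delta> \<longrightarrow> (\<exists>y'\<in>mv_extend A F x'. dist y y' < \<epsilon>)"
      by (intro exI[of _ \<delta>]) (auto simp: mv_extend_def intro: exI[of _ y])
  qed
qed

lemma mv_continuous_at_mv_extend_notin_closure: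
  assumes "x \<notin> closure A"
  shows "mv_continuous_at UNIV (mv_extend A F) x"
proof -
  obtain \<delta> where "\<delta> > 0" and ball_disjoint: "\<forall>x'. dist x' x < \<delta> \<longrightarrow> x' \<notin> A"
    using assms by (auto simp: closure_approachable)
  fix y :: 'b
  have near: "y \<in> mv_extend A F x'" if "dist x x' < \<delta>" for x'
    using ball_disjoint that by (simp add: mv_extend_def dist_commute)
  show ?thesis
  proof (rule mv_continuous_atI)
    show "y \<in> mv_extend A F x"
      using near \<open>\<delta> > 0\<close> by simp
  next
    fix \<epsilon> :: real assume "\<epsilon> > 0"
    with near \<open>\<delta> > 0\<close>
    show "\<exists>\<delta>>0. \<forall>x'\<in>UNIV. dist x x' < \<delta> \<longrightarrow> (\<exists>y'\<in>mv_extend A F x'. dist y y' < \<epsilon>)"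
      by (intro exI[of _ \<delta>]) (auto intro: bexI[of _ y])
  qed
qed

theorem corollary2p4:
  fixes A :: "'a::metric_space set" and F :: "'a \<Rightarrow> 'b::metric_space set"
  assumes "closed A"
    and "mv_fun A F"
    and "\<forall>x\<in>A. mv_continuous_at A F x"
  shows "\<exists>G :: 'a \<Rightarrow> 'b set. mv_fun UNIV G \<and> (\<forall>x\<in>A. G x = F x)
           \<and> (\<forall>x. mv_continuous_at UNIV G x)"
proof (intro exI[of _ "mv_extend A F"] conjI allI ballI)
  show "mv_fun UNIV (mv_extend A F)"
    using assms(2) by (rule mv_fun_mv_extend)
  show "mv_extend A F x = F x" if "x \<in> A" for x
    using that by (simp add: mv_extend_def)
  show "mv_continuous_at UNIV (mv_extend A F) x" for x
  proof (cases "x \<in> A")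
    case True
    then show ?thesis using assms(3) by (simp add: mv_continuous_at_mv_extend_in)
  next
    case False
    then have "x \<notin> closure A" using assms(1) by (simp add: closure_closed)
    then show ?thesis by (rule mv_continuous_at_mv_extend_notin_closure)
  qed
qed

end
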